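(* Let $\nu\in(0,1)$ and $t>0$. For integers $m\ge0$ put $g_m(t):=t^{(1-2^{-m})\nu}f_\nu\big(t^{2^{-m}}\big)$ (so $g_0(t)=f_\nu(t)$). Then for every $m\in\mathbb{N}$, $$t^\nu\le g_m(t)\le g_{m-1}(t),$$ i.e. $$t^\nu\le\cdots\le t^{(1-\frac{1}{2^m})\nu}f_\nu\big(t^{\frac1{2^m}}\big)\le t^{(1-\frac{1}{2^{m-1}})\nu}f_\nu\big(t^{\frac1{2^{m-1}}}\big)\le\cdots\le t^{\frac{3\nu}{4}}f_\nu\big(t^{\frac14}\big)\le t^{\frac{\nu}{2}}f_\nu\big(t^{\frac12}\big)\le f_\nu(t),$$ and moreover $g_m(t)\to t^\nu$ as $m\to\infty$.
   Context: For $\nu\in(0,1)$, $f_\nu(t):=\dfrac{1}{\log t}\left\{\dfrac{1-\nu}{\nu}(t^\nu-1)+\dfrac{\nu}{1-\nu}(t-t^\nu)\right\}$ for $t>0$, $t\ne1$, and $f_\nu(1):=1$ (this is the weighted logarithmic mean $L_\nu(1,t)$). *)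

theory Defs
  imports "HOL-Analysis.Analysis"
begin

definition f_nu :: "real \<Rightarrow> real \<Rightarrow> real" where
  "f_nu \<nu> t = (if t = 1 then 1 else
     (1 / ln t) * ((1 - \<nu>) / \<nu> * (t powr \<nu> - 1) + \<nu> / (1 - \<nu>) * (t - t powr \<nu>)))"

definition g_m :: "real \<Rightarrow> nat \<Rightarrow> real \<Rightarrow> real" where
  "g_m \<nu> m t = t powr ((1 - 1 / 2 ^ m) * \<nu>) * f_nu \<nu> (t powr (1 / 2 ^ m))"

end

theory Submission
  imports Defs "HOL-Real_Asymp.Real_Asymp"
begin

text \<open>
  The whole chain comes from one inequality, \<open>s\<^sup>\<nu> f\<^sub>\<nu>(s) \<le> f\<^sub>\<nu>(s\<^sup>2)\<close>, applied with
  \<open>s = t\<^bsup>1/2\<^sup>m\<^esup>\<close>. Writing \<open>a = s\<^sup>\<nu>\<close>, the difference \<open>f\<^sub>\<nu>(s\<^sup>2) - s\<^sup>\<nu> f\<^sub>\<nu>(s)\<close> factors as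
  \<open>(\<nu>(s-a) - (1-\<nu>)(a-1)) (\<nu>(s-a) + (1-\<nu>)(a-1)) / (2\<nu>(1-\<nu>) ln s)\<close>: the first
  factor is nonnegative by Young's inequality \<open>s\<^sup>\<nu> \<le> \<nu>s + 1 - \<nu>\<close>, and the second has
  the sign of \<open>ln s\<close> because \<open>a\<close> lies between \<open>1\<close> and \<open>s\<close>. The sequence is therefore
  decreasing, and it converges to \<open>t\<^sup>\<nu> f\<^sub>\<nu>(1) = t\<^sup>\<nu>\<close> by continuity of \<open>f\<^sub>\<nu>\<close> at \<open>1\<close>,
  which also gives the lower bound.
\<close>

lemma f_nu_eq:
  "t \<noteq> 1 \<Longrightarrow> f_nu \<nu> t = ((1 - \<nu>) / \<nu> * (t powr \<nu> - 1) + \<nu> / (1 - \<nu>) * (t - t powr \<nu>)) / ln t"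
  by (simp add: f_nu_def)

lemma f_nu_tendsto_1:
  fixes \<nu> :: real
  assumes "0 < \<nu>" "\<nu> < 1"
  shows "(f_nu \<nu> \<longlongrightarrow> 1) (at 1)"
proof -
  have "((\<lambda>y. ((1 - \<nu>) / \<nu> * (y powr \<nu> - 1) + \<nu> / (1 - \<nu>) * (y - y powr \<nu>)) / ln y)
          \<longlongrightarrow> 1) (at 1)"
    using assms by (real_asymp simp: field_simps)
  moreover have "\<forall>\<^sub>F y in at 1.
      ((1 - \<nu>) / \<nu> * (y powr \<nu> - 1) + \<nu> / (1 - \<nu>) * (y - y powr \<nu>)) / ln y = f_nu \<nu> y"
    by (auto simp: eventually_at_filter f_nu_eq)
  ultimately show ?thesis
    by (rule Lim_transform_eventually)
qed

lemma isCont_f_nu_1: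
  fixes \<nu> :: real
  assumes "0 < \<nu>" "\<nu> < 1"
  shows "isCont (f_nu \<nu>) 1"
  using f_nu_tendsto_1[OF assms] by (simp add: isCont_def f_nu_def)

lemma weighted_powr_gaps_div_ln_nonneg:
  fixes \<nu> s :: real
  assumes "0 < \<nu>" "\<nu> < 1" "0 < s"
  shows "0 \<le> (\<nu> * (s - s powr \<nu>) + (1 - \<nu>) * (s powr \<nu> - 1)) / ln s"
proof (cases "1 < s")
  case True
  have "1 \<le> s powr \<nu>" using True assms by (simp add: ge_one_powr_ge_zero)
  moreover have "s powr \<nu> \<le> s" using powr_mono[of \<nu> 1 s] True assms by simp
  ultimately show ?thesis using True assms by (simp add: divide_nonneg_pos)
next
  case False
  have "s powr \<nu> \<le> 1" using False assms by (simp add: powr_le1)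
  moreover have "s \<le> s powr \<nu>" using powr_mono'[of \<nu> 1 s] False assms by simp
  ultimately have "\<nu> * (s - s powr \<nu>) + (1 - \<nu>) * (s powr \<nu> - 1) \<le> 0"
    using assms by (simp add: mult_nonneg_nonpos mult_nonpos_nonneg add_nonpos_nonpos)
  moreover have "ln s \<le> 0" using False assms by simp
  ultimately show ?thesis by (rule divide_nonpos_nonpos)
qed

lemma powr_mult_f_nu_le_f_nu_square:
  fixes \<nu> s :: real
  assumes nu: "0 < \<nu>" "\<nu> < 1" and s: "0 < s"
  shows "s powr \<nu> * f_nu \<nu> s \<le> f_nu \<nu> (s\<^sup>2)"
proof (cases "s = 1")
  case True
  then show ?thesis by (simp add: f_nu_def)
next
  case False
  define a where "a = s powr \<nu>"
  define p where "p = (1 - \<nu>) / \<nu>"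
  define q where "q = \<nu> / (1 - \<nu>)"
  have "s\<^sup>2 \<noteq> 1" using s False by (simp add: power2_eq_1_iff)
  moreover have "(s\<^sup>2) powr \<nu> = a\<^sup>2" using s by (simp add: a_def power2_eq_square powr_mult)
  moreover have "ln (s\<^sup>2) = 2 * ln s" using s by (simp add: ln_realpow)
  ultimately have rhs: "f_nu \<nu> (s\<^sup>2) = (p * (a\<^sup>2 - 1) + q * (s\<^sup>2 - a\<^sup>2)) / (2 * ln s)"
    by (simp add: f_nu_eq p_def q_def)
  have lhs: "s powr \<nu> * f_nu \<nu> s = a * (p * (a - 1) + q * (s - a)) / ln s"
    using False by (simp add: f_nu_eq a_def p_def q_def)
  define X where "X = \<nu> * (s - a) - (1 - \<nu>) * (a - 1)"
  define Y where "Y = \<nu> * (s - a) + (1 - \<nu>) * (a - 1)"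
  have "ln s \<noteq> 0" using s False by simp
  hence "f_nu \<nu> (s\<^sup>2) - s powr \<nu> * f_nu \<nu> s = (q * (s - a)\<^sup>2 - p * (a - 1)\<^sup>2) / (2 * ln s)"
    unfolding lhs rhs by (simp add: field_simps power2_eq_square)
  also have "\<dots> = X * (Y / ln s) / (2 * \<nu> * (1 - \<nu>))"
    using nu by (simp add: X_def Y_def p_def q_def field_simps power2_eq_square)
  finally have diff: "f_nu \<nu> (s\<^sup>2) - s powr \<nu> * f_nu \<nu> s = X * (Y / ln s) / (2 * \<nu> * (1 - \<nu>))" .
  have "a \<le> \<nu> * s + (1 - \<nu>)"
    using Youngs_inequality_0[of \<nu> "1 - \<nu>" s 1] nu s by (simp add: a_def)
  hence "0 \<le> X" by (simp add: X_def algebra_simps)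
  moreover have "0 \<le> Y / ln s"
    using weighted_powr_gaps_div_ln_nonneg[OF nu s] by (simp add: Y_def a_def)
  ultimately have "0 \<le> X * (Y / ln s) / (2 * \<nu> * (1 - \<nu>))"
    using nu by (metis divide_nonneg_pos mult_nonneg_nonneg mult_pos_pos diff_gt_0_iff_gt zero_less_numeral)
  with diff show ?thesis by linarith
qed

lemma g_m_Suc_le:
  fixes \<nu> t :: real
  assumes nu: "0 < \<nu>" "\<nu> < 1" and t: "0 < t"
  shows "g_m \<nu> (Suc k) t \<le> g_m \<nu> k t"
proof -
  define s where "s = t powr (1 / 2 ^ Suc k)"
  define c where "c = t powr ((1 - 1 / 2 ^ k) * \<nu>)"
  have s_pos: "0 < s" using t by (simp add: s_def)
  have "s\<^sup>2 = t powr (1 / 2 ^ k)"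
    using t by (simp add: s_def powr_power)
  hence g_k: "g_m \<nu> k t = c * f_nu \<nu> (s\<^sup>2)" by (simp add: g_m_def c_def)
  have "c * s powr \<nu> = t powr ((1 - 1 / 2 ^ k) * \<nu> + \<nu> / 2 ^ Suc k)"
    by (simp add: c_def s_def powr_powr powr_add)
  also have "(1 - 1 / 2 ^ k) * \<nu> + \<nu> / 2 ^ Suc k = (1 - 1 / 2 ^ Suc k) * \<nu>"
    by (simp add: field_simps)
  finally have "g_m \<nu> (Suc k) t = c * (s powr \<nu> * f_nu \<nu> s)"
    by (simp add: g_m_def s_def mult.assoc)
  also have "\<dots> \<le> c * f_nu \<nu> (s\<^sup>2)"
    by (simp add: c_def mult_left_mono powr_mult_f_nu_le_f_nu_square[OF nu s_pos])
  finally show ?thesis by (simp add: g_k)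
qed

lemma g_m_tendsto:
  fixes \<nu> t :: real
  assumes nu: "0 < \<nu>" "\<nu> < 1" and t: "0 < t"
  shows "(\<lambda>m. g_m \<nu> m t) \<longlonglongrightarrow> t powr \<nu>"
proof -
  have inv_pow2: "(\<lambda>m. 1 / 2 ^ m :: real) \<longlonglongrightarrow> 0"
    by real_asymp
  have "(\<lambda>m. t powr ((1 - 1 / 2 ^ m) * \<nu>)) \<longlonglongrightarrow> t powr ((1 - 0) * \<nu>)"
    using t by (intro tendsto_intros inv_pow2) auto
  moreover have "(\<lambda>m. t powr (1 / 2 ^ m)) \<longlonglongrightarrow> t powr 0"
    using t by (intro tendsto_intros inv_pow2) auto
  hence "(\<lambda>m. f_nu \<nu> (t powr (1 / 2 ^ m))) \<longlonglongrightarrow> f_nu \<nu> 1"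
    using isCont_tendsto_compose[OF isCont_f_nu_1[OF nu]] t by simp
  ultimately show ?thesis
    unfolding g_m_def using tendsto_mult by (fastforce simp: f_nu_def)
qed

theorem corollary2p10:
  fixes \<nu> t :: real
  assumes "0 < \<nu>" and "\<nu> < 1" and "0 < t"
  shows "(\<forall>m::nat. m \<ge> 1 \<longrightarrow> t powr \<nu> \<le> g_m \<nu> m t \<and> g_m \<nu> m t \<le> g_m \<nu> (m - 1) t)
         \<and> ((\<lambda>m. g_m \<nu> m t) \<longlonglongrightarrow> t powr \<nu>)"
proof -
  have step: "g_m \<nu> (Suc k) t \<le> g_m \<nu> k t" for k
    using g_m_Suc_le assms by blast
  have lim: "(\<lambda>m. g_m \<nu> m t) \<longlonglongrightarrow> t powr \<nu>"
    using g_m_tendsto assms by blast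
  have "decseq (\<lambda>m. g_m \<nu> m t)"
    using step by (simp add: decseq_Suc_iff)
  hence "t powr \<nu> \<le> g_m \<nu> m t" for m
    using decseq_ge lim by blast
  moreover have "g_m \<nu> m t \<le> g_m \<nu> (m - 1) t" if "m \<ge> 1" for m
    using step[of "m - 1"] that by simp
  ultimately show ?thesis using lim by blast
qed

end
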